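(* Let $q$ be a prime power, $n\geq 1$, and $a_0,\ldots,a_n$ positive integers. Fix $i\in\{0,\ldots,n\}$ and consider the morphism $$\pi_i:\mathbb{P}(a_0,\ldots,a_{i-1},1,a_{i+1},\ldots,a_n)\to\mathbb{P}(a_0,\ldots,a_n),\qquad [x_0:\cdots:x_n]\mapsto[x_0:\cdots:x_{i-1}:x_i^{a_i}:x_{i+1}:\cdots:x_n].$$ Let $P=[y_0:\cdots:y_n]\in\mathbb{P}(a_0,\ldots,a_n)(\mathbb{F}_q)$ with $y_i=1$, $y_j\in\mathbb{F}_q$ for all $0\le j\le n$, and $P\neq[0:\cdots:0:1:0:\cdots:0]$ (the point whose only nonzero coordinate is the $i$-th one). Let $\operatorname{Supp}(P)=\{j: y_j\neq 0\}$, and set $$\delta_P=\gcd(a_j\mid j\in\operatorname{Supp}(P)),\qquad \delta_{i,P}=\gcd(a_j\mid j\in\operatorname{Supp}(P),\ j\neq i).$$ Then: (1) $\displaystyle \#\pi_i^{-1}(P)(\mathbb{F}_q)=\frac{\gcd\bigl(a_i,(q-1)\,\delta_{i,P}\bigr)}{\delta_P}.$ (2) If moreover $\gcd(a_i,a_j,q-1)=1$ for every $j\in\{0,\ldots,n\}\setminus\{i\}$, then $\#\pi_i^{-1}(P)(\mathbb{F}_q)=\gcd(a_i,q-1)$.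
   Context: For positive integers $b_0,\ldots,b_n$, the weighted projective space $\mathbb{P}(b_0,\ldots,b_n)$ over $\overline{\mathbb{F}}_q$ is the set of tuples $(x_0,\ldots,x_n)\in\overline{\mathbb{F}}_q^{\,n+1}\setminus\{0\}$ modulo the equivalence $(x_0,\ldots,x_n)\sim(\lambda^{b_0}x_0,\ldots,\lambda^{b_n}x_n)$ for $\lambda\in\overline{\mathbb{F}}_q^*$; the class of $(x_0,\ldots,x_n)$ is written $[x_0:\cdots:x_n]$. Its set of $\mathbb{F}_q$-rational points $\mathbb{P}(b_0,\ldots,b_n)(\mathbb{F}_q)$ consists of the points fixed by the Frobenius map $[x_0:\cdots:x_n]\mapsto[x_0^q:\cdots:x_n^q]$. For $P$ as in the claim, $\pi_i^{-1}(P)(\mathbb{F}_q)$ denotes the set of $\mathbb{F}_q$-rational points $Q$ of the source space with $\pi_i(Q)=P$. *)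

theory Defs
  imports "HOL-Computational_Algebra.Polynomial"
begin

text \<open>Points of affine (n+1)-space are modelled as functions nat => 'k that vanish
beyond index n; weights are b :: nat => nat (only b 0 .. b n matter).\<close>

definition wp_vecs :: "nat \<Rightarrow> (nat \<Rightarrow> 'k::field) set" where
  "wp_vecs n = {x. (\<forall>j>n. x j = 0) \<and> (\<exists>j\<le>n. x j \<noteq> 0)}"

definition wp_rel :: "nat \<Rightarrow> (nat \<Rightarrow> nat) \<Rightarrow> ((nat \<Rightarrow> 'k::field) \<times> (nat \<Rightarrow> 'k)) set" where
  "wp_rel n b = {(x, y). x \<in> wp_vecs n \<and> y \<in> wp_vecs n \<and>
      (\<exists>l. l \<noteq> 0 \<and> (\<forall>j\<le>n. y j = l ^ (b j) * x j))}"

definition WP :: "nat \<Rightarrow> (nat \<Rightarrow> nat) \<Rightarrow> (nat \<Rightarrow> 'k::field) set set" where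
  "WP n b = wp_vecs n // wp_rel n b"

definition wp_class :: "nat \<Rightarrow> (nat \<Rightarrow> nat) \<Rightarrow> (nat \<Rightarrow> 'k::field) \<Rightarrow> (nat \<Rightarrow> 'k) set" where
  "wp_class n b x = wp_rel n b `` {x}"

definition frob_vec :: "nat \<Rightarrow> (nat \<Rightarrow> 'k::field) \<Rightarrow> (nat \<Rightarrow> 'k)" where
  "frob_vec q x = (\<lambda>j. x j ^ q)"

text \<open>F_q-rational points: classes fixed by the Frobenius [x] |-> [x^q].\<close>
definition WP_rat :: "nat \<Rightarrow> (nat \<Rightarrow> nat) \<Rightarrow> nat \<Rightarrow> (nat \<Rightarrow> 'k::field) set set" where
  "WP_rat n b q = {P \<in> WP n b. \<forall>x\<in>P. wp_class n b (frob_vec q x) = P}"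

definition pi_vec :: "nat \<Rightarrow> (nat \<Rightarrow> nat) \<Rightarrow> (nat \<Rightarrow> 'k::field) \<Rightarrow> (nat \<Rightarrow> 'k)" where
  "pi_vec i a x = x(i := x i ^ a i)"

definition pi_fibre_rat :: "nat \<Rightarrow> nat \<Rightarrow> (nat \<Rightarrow> nat) \<Rightarrow> nat \<Rightarrow> (nat \<Rightarrow> 'k::field) set
    \<Rightarrow> (nat \<Rightarrow> 'k) set set" where
  "pi_fibre_rat n i a q P =
     {Q \<in> WP_rat n (a(i := 1)) q. \<forall>x\<in>Q. wp_class n a (pi_vec i a x) = P}"

end

theory Submission
  imports Defs
begin

(* Every point of the fibre of pi_i over P = [y] is a class [y(i := z)] with z ^ a_i = 1, and two
   such classes coincide in P(a(i := 1)) iff (z'/z) ^ delta_{i,P} = 1. Frobenius sends y(i := z) to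
   y(i := z ^ q), so [y(i := z)] is rational iff z ^ ((q - 1) delta_{i,P}) = 1. Hence the rational
   fibre is the image of the g-th roots of unity, g = gcd(a_i, (q - 1) delta_{i,P}), under a map
   identifying z and z' iff z ^ delta_P = z' ^ delta_P; so it has as many points as there are
   (g / delta_P)-th roots of unity. As g / delta_P = gcd(a_i / delta_P, q - 1) divides q - 1, it is
   prime to p, and the algebraically closed field contains exactly g / delta_P of them. Under the
   hypothesis of (2), delta_P is coprime to q - 1, which gives g / delta_P = gcd(a_i, q - 1). *)

lemma power_eq_1_dvd:
  fixes x :: "'a::monoid_mult"
  assumes "x ^ m = 1" and "m dvd k"
  shows "x ^ k = 1"
  using assms by (auto elim!: dvdE simp: power_mult)

lemma power_gcd_eq_1:
  fixes x :: "'a::monoid_mult"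
  assumes "x ^ m = 1" and "x ^ k = 1"
  shows "x ^ gcd m k = 1"
proof (cases "m = 0")
  case True
  then show ?thesis using assms by simp
next
  case False
  then obtain u v where uv: "m * u = k * v + gcd m k" using bezout_nat by blast
  have "1 = x ^ (m * u)" by (simp add: power_mult assms)
  also have "\<dots> = x ^ (k * v) * x ^ gcd m k" by (simp add: uv power_add)
  also have "\<dots> = x ^ gcd m k" by (simp add: power_mult assms)
  finally show ?thesis by simp
qed

lemma power_Gcd_eq_1:
  fixes x :: "'a::monoid_mult"
  assumes "finite J" and "\<forall>j\<in>J. x ^ m j = 1"
  shows "x ^ Gcd (m ` J) = 1"
  using assms by (induction J rule: finite_induct) (auto intro: power_gcd_eq_1)

lemma root_of_unity_nonzero:
  fixes x :: "'a::field"
  assumes "x ^ m = 1" and "m > 0"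
  shows "x \<noteq> 0"
  using assms by (metis power_0_left zero_neq_one not_gr0)

lemma gcd_mult_eq_gcd_mult_gcd_div:
  fixes A c \<delta> :: nat
  assumes "A > 0"
  shows "gcd A (c * \<delta>) = gcd A \<delta> * gcd (A div gcd A \<delta>) c"
proof -
  define d where "d = gcd A \<delta>"
  have A: "A = d * (A div d)" and \<delta>: "\<delta> = d * (\<delta> div d)" unfolding d_def by simp_all
  have "coprime (A div d) (\<delta> div d)" unfolding d_def using div_gcd_coprime assms by blast
  then have "gcd (A div d) (c * (\<delta> div d)) = gcd (A div d) c"
    by (rule gcd_mult_right_right_cancel)
  moreover have "gcd A (c * \<delta>) = d * gcd (A div d) (c * (\<delta> div d))"
    by (subst A, subst \<delta>) (simp add: gcd_mult_distrib_nat ac_simps)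
  ultimately show ?thesis unfolding d_def by simp
qed

lemma gcd_div_coprime:
  fixes A c d :: nat
  assumes "coprime d c" and "d dvd A"
  shows "gcd (A div d) c = gcd A c"
proof -
  obtain A' where "A = d * A'" using assms(2) by blast
  then show ?thesis using assms
    by (cases "d = 0") (auto simp: coprime_commute gcd_mult_left_right_cancel mult.commute)
qed

lemma CHAR_eq_prime:
  assumes "prime p" and "of_nat p = (0::'a::field)"
  shows "CHAR('a) = p"
proof -
  have "CHAR('a) dvd p" using assms(2) by (simp add: of_nat_eq_0_iff_char_dvd)
  then show ?thesis using assms(1) by (auto simp: prime_nat_iff)
qed

lemma of_nat_neq_0_if_dvd_prime_power_minus_1:
  assumes "prime p" and "of_nat p = (0::'a::field)" and "e \<ge> 1" and "m dvd p ^ e - 1"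
  shows "of_nat m \<noteq> (0::'a)"
proof
  assume "of_nat m = (0::'a)"
  then have "p dvd m" by (simp add: of_nat_eq_0_iff_char_dvd CHAR_eq_prime[OF assms(1,2)])
  then have "p dvd p ^ e - 1" using assms(4) by (rule dvd_trans)
  moreover have "p dvd p ^ e" using assms(3) by (simp add: dvd_power)
  ultimately have "p dvd p ^ e - (p ^ e - 1)" by (simp add: dvd_diff_nat)
  moreover have "p ^ e > 0" using assms(1) by (simp add: prime_gt_0_nat)
  ultimately have "p dvd 1" by simp
  with assms(1) show False by simp
qed

lemma card_image_eq_if_same_fibres:
  assumes "\<forall>x\<in>R. \<forall>x'\<in>R. f x = f x' \<longleftrightarrow> g x = g x'"
  shows "card (f ` R) = card (g ` R)"
proof -
  define h where "h = g \<circ> inv_into R f"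
  have h: "h (f x) = g x" if "x \<in> R" for x
    using assms that inv_into_into[of "f x" f R] f_inv_into_f[of "f x" f R]
    unfolding h_def by auto
  have "bij_betw h (f ` R) (g ` R)"
    unfolding bij_betw_def inj_on_def using h assms by (auto simp: image_iff)
  then show ?thesis by (rule bij_betw_same_card)
qed

lemma card_roots_eq_degree:
  fixes f :: "'k::field poly"
  assumes alg_closed: "\<forall>f :: 'k poly. degree f > 0 \<longrightarrow> (\<exists>z. poly f z = 0)"
    and "f \<noteq> 0" and "\<forall>z. poly f z = 0 \<longrightarrow> poly (pderiv f) z \<noteq> 0"
  shows "card {z. poly f z = 0} = degree f"
  using assms(2,3)
proof (induction "degree f" arbitrary: f)
  case 0
  then obtain c where "f = [:c:]" by (metis degree_eq_zeroE)
  with 0 show ?case by simp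
next
  case (Suc k)
  then obtain r where r: "poly f r = 0" using alg_closed by fastforce
  then obtain g where fg: "f = [:-r, 1:] * g" by (metis dvdE poly_eq_0_iff_dvd)
  have g0: "g \<noteq> 0" using fg Suc.prems by auto
  have "degree f = degree [:-r, 1:] + degree g"
    unfolding fg by (rule degree_mult_eq) (use g0 in auto)
  then have deg_g: "degree g = k" using Suc.hyps(2) by simp
  have "pderiv [:-r, 1:] = (1 :: 'k poly)" by (simp add: pderiv_pCons)
  then have pderiv_f: "pderiv f = [:-r, 1:] * pderiv g + g" by (simp only: fg pderiv_mult mult_1_right)
  then have gr: "poly g r \<noteq> 0" using Suc.prems(2) r by auto
  have "\<forall>s. poly g s = 0 \<longrightarrow> poly (pderiv g) s \<noteq> 0"
    using Suc.prems(2) gr fg pderiv_f by auto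
  then have "card {s. poly g s = 0} = k" using Suc.hyps(1)[of g] deg_g g0 by simp
  moreover have "{s. poly f s = 0} = insert r {s. poly g s = 0}" using fg by auto
  ultimately show ?case using gr poly_roots_finite[OF g0] Suc.hyps(2) by simp
qed

lemma card_roots_of_unity:
  assumes alg_closed: "\<forall>f :: 'k::field poly. degree f > 0 \<longrightarrow> (\<exists>z. poly f z = 0)"
    and "m > 0" and "of_nat m \<noteq> (0::'k)"
  shows "card {z::'k. z ^ m = 1} = m"
proof -
  define f :: "'k poly" where "f = monom 1 m + [:-1:]"
  have deg_f: "degree f = m" unfolding f_def using assms(2)
    by (subst degree_add_eq_left) (auto simp: degree_monom_eq)
  have roots: "{z. poly f z = 0} = {z. z ^ m = 1}" by (simp add: f_def poly_monom)
  have "poly (pderiv f) z \<noteq> 0" if "poly f z = 0" for z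
  proof -
    have "z \<noteq> 0" using that roots root_of_unity_nonzero assms(2) by blast
    then show ?thesis using assms(3) by (simp add: f_def pderiv_add pderiv_monom poly_monom)
  qed
  then show ?thesis
    using card_roots_eq_degree[OF alg_closed, of f] deg_f roots assms(2) by fastforce
qed

lemma exists_nth_root:
  assumes alg_closed: "\<forall>f :: 'k::field poly. degree f > 0 \<longrightarrow> (\<exists>z. poly f z = 0)"
    and "d > 0"
  shows "\<exists>z. z ^ d = (w::'k)"
proof -
  define f :: "'k poly" where "f = monom 1 d + [:-w:]"
  have "degree f = d" unfolding f_def using assms(2)
    by (subst degree_add_eq_left) (auto simp: degree_monom_eq)
  then obtain z where "poly f z = 0" using alg_closed assms(2) by auto
  then show ?thesis by (auto simp: f_def poly_monom)
qed

lemma power_image_roots_of_unity: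
  assumes alg_closed: "\<forall>f :: 'k::field poly. degree f > 0 \<longrightarrow> (\<exists>z. poly f z = 0)"
    and "d > 0"
  shows "(\<lambda>z. z ^ d) ` {z::'k. z ^ (d * m) = 1} = {w. w ^ m = 1}"
proof (intro set_eqI iffI)
  fix w :: 'k
  assume "w \<in> (\<lambda>z. z ^ d) ` {z. z ^ (d * m) = 1}"
  then show "w \<in> {w. w ^ m = 1}" by (auto simp: power_mult)
next
  fix w :: 'k
  assume "w \<in> {w. w ^ m = 1}"
  moreover obtain z where "z ^ d = w" using exists_nth_root[OF alg_closed assms(2)] by blast
  ultimately show "w \<in> (\<lambda>z. z ^ d) ` {z. z ^ (d * m) = 1}" by (auto simp: power_mult)
qed

lemma wp_equiv: "equiv (wp_vecs n) (wp_rel n b :: ((nat \<Rightarrow> 'k::field) \<times> _) set)"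
proof (rule equivI)
  show "refl_on (wp_vecs n) (wp_rel n b :: ((nat \<Rightarrow> 'k) \<times> _) set)"
    unfolding refl_on_def wp_rel_def by (auto intro!: exI[of _ 1])
  show "sym (wp_rel n b :: ((nat \<Rightarrow> 'k) \<times> _) set)"
  proof (rule symI)
    fix x y :: "nat \<Rightarrow> 'k"
    assume "(x, y) \<in> wp_rel n b"
    then obtain l where l: "x \<in> wp_vecs n" "y \<in> wp_vecs n" "l \<noteq> 0" "\<forall>j\<le>n. y j = l ^ b j * x j"
      unfolding wp_rel_def by auto
    then have "\<forall>j\<le>n. x j = inverse l ^ b j * y j" by (simp add: power_inverse)
    moreover have "inverse l \<noteq> 0" using l by simp
    ultimately show "(y, x) \<in> wp_rel n b" using l unfolding wp_rel_def by blast
  qed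
  show "trans (wp_rel n b :: ((nat \<Rightarrow> 'k) \<times> _) set)"
  proof (rule transI)
    fix x y z :: "nat \<Rightarrow> 'k"
    assume "(x, y) \<in> wp_rel n b" "(y, z) \<in> wp_rel n b"
    then obtain l m where lm: "x \<in> wp_vecs n" "z \<in> wp_vecs n" "l \<noteq> 0" "m \<noteq> 0"
       "\<forall>j\<le>n. y j = l ^ b j * x j" "\<forall>j\<le>n. z j = m ^ b j * y j"
      unfolding wp_rel_def by auto
    then have "\<forall>j\<le>n. z j = (m * l) ^ b j * x j" by (simp add: power_mult_distrib)
    moreover have "m * l \<noteq> 0" using lm by simp
    ultimately show "(x, z) \<in> wp_rel n b" using lm unfolding wp_rel_def by blast
  qed
qed (auto simp: wp_rel_def)

lemma wp_class_eq_iff: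
  assumes "x \<in> wp_vecs n" and "x' \<in> wp_vecs n"
  shows "wp_class n b x = wp_class n b x' \<longleftrightarrow> (x, x') \<in> wp_rel n b"
  unfolding wp_class_def using equiv_class_eq_iff[OF wp_equiv] assms by metis

lemma wp_class_eq: "(x, x') \<in> wp_rel n b \<Longrightarrow> wp_class n b x = wp_class n b x'"
  unfolding wp_class_def by (rule equiv_class_eq[OF wp_equiv])

lemma mem_wp_class_iff: "x' \<in> wp_class n b x \<longleftrightarrow> (x, x') \<in> wp_rel n b"
  unfolding wp_class_def by auto

lemma wp_class_self: "x \<in> wp_vecs n \<Longrightarrow> x \<in> wp_class n b x"
  unfolding wp_class_def using equiv_class_self[OF wp_equiv] by metis

lemma WP_cases:
  assumes "Q \<in> WP n b"
  obtains x where "x \<in> wp_vecs n" and "Q = wp_class n b x"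
  using assms unfolding wp_class_def WP_def by (auto elim: quotientE)

lemma frob_vec_wp_vecs: "q > 0 \<Longrightarrow> x \<in> wp_vecs n \<Longrightarrow> frob_vec q x \<in> wp_vecs n"
  unfolding wp_vecs_def frob_vec_def by auto

lemma frob_vec_wp_rel:
  assumes "q > 0" and "(x, x') \<in> wp_rel n b"
  shows "(frob_vec q x, frob_vec q x') \<in> wp_rel n b"
proof -
  obtain l where l: "x \<in> wp_vecs n" "x' \<in> wp_vecs n" "l \<noteq> 0" "\<forall>j\<le>n. x' j = l ^ b j * x j"
    using assms(2) unfolding wp_rel_def by auto
  then have "\<forall>j\<le>n. frob_vec q x' j = (l ^ q) ^ b j * frob_vec q x j"
    by (simp add: frob_vec_def power_mult_distrib flip: power_mult) (simp add: mult.commute)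
  moreover have "l ^ q \<noteq> 0" using l by simp
  ultimately show ?thesis using l frob_vec_wp_vecs[OF assms(1)] unfolding wp_rel_def by blast
qed

lemma wp_class_in_WP_rat_iff:
  assumes "q > 0" and x: "x \<in> wp_vecs n"
  shows "wp_class n b x \<in> WP_rat n b q \<longleftrightarrow> wp_class n b (frob_vec q x) = wp_class n b x"
proof
  assume "wp_class n b x \<in> WP_rat n b q"
  then show "wp_class n b (frob_vec q x) = wp_class n b x"
    using wp_class_self[OF x] unfolding WP_rat_def by blast
next
  assume frob_x: "wp_class n b (frob_vec q x) = wp_class n b x"
  have "wp_class n b (frob_vec q x') = wp_class n b x" if "x' \<in> wp_class n b x" for x'
  proof -
    have "(x, x') \<in> wp_rel n b" using that by (simp add: mem_wp_class_iff)
    then have "(frob_vec q x, frob_vec q x') \<in> wp_rel n b" by (rule frob_vec_wp_rel[OF assms(1)])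
    then show ?thesis using frob_x wp_class_eq by metis
  qed
  moreover have "wp_class n b x \<in> WP n b" using x unfolding WP_def wp_class_def by (rule quotientI)
  ultimately show "wp_class n b x \<in> WP_rat n b q" unfolding WP_rat_def by blast
qed

lemma pi_vec_wp_vecs:
  assumes "i \<le> n" and "x \<in> wp_vecs n"
  shows "pi_vec i a x \<in> wp_vecs n"
proof -
  obtain j where j: "j \<le> n" "x j \<noteq> 0" using assms(2) unfolding wp_vecs_def by blast
  then have "pi_vec i a x j \<noteq> 0" by (auto simp: pi_vec_def)
  with j assms show ?thesis unfolding wp_vecs_def by (auto simp: pi_vec_def)
qed

lemma pi_vec_wp_rel:
  assumes "i \<le> n" and "(x, x') \<in> wp_rel n (a(i := 1))"
  shows "(pi_vec i a x, pi_vec i a x') \<in> wp_rel n a"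
proof -
  obtain l where l: "x \<in> wp_vecs n" "x' \<in> wp_vecs n" "l \<noteq> 0"
      "\<forall>j\<le>n. x' j = l ^ (a(i := 1)) j * x j"
    using assms(2) unfolding wp_rel_def by auto
  then have "\<forall>j\<le>n. pi_vec i a x' j = l ^ a j * pi_vec i a x j"
    using assms(1) by (auto simp: pi_vec_def power_mult_distrib)
  with l pi_vec_wp_vecs[OF assms(1)] show ?thesis unfolding wp_rel_def by blast
qed

lemma wp_class_in_pi_fibre_rat_iff:
  assumes "i \<le> n" and x: "x \<in> wp_vecs n"
  shows "wp_class n (a(i := 1)) x \<in> pi_fibre_rat n i a q P \<longleftrightarrow>
    wp_class n (a(i := 1)) x \<in> WP_rat n (a(i := 1)) q \<and> wp_class n a (pi_vec i a x) = P"
proof -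
  have "wp_class n a (pi_vec i a x') = wp_class n a (pi_vec i a x)"
    if "x' \<in> wp_class n (a(i := 1)) x" for x'
  proof -
    have "(x, x') \<in> wp_rel n (a(i := 1))" using that by (simp add: mem_wp_class_iff)
    then have "(pi_vec i a x, pi_vec i a x') \<in> wp_rel n a" by (rule pi_vec_wp_rel[OF assms(1)])
    then show ?thesis by (simp add: wp_class_eq)
  qed
  then show ?thesis using wp_class_self[OF x] unfolding pi_fibre_rat_def by blast
qed

locale rational_point_fibre =
  fixes n i q :: nat and a :: "nat \<Rightarrow> nat" and y :: "nat \<Rightarrow> 'k::field"
  assumes i_le_n: "i \<le> n" and a_i_pos: "a i > 0" and q_pos: "q > 0"
    and y_i: "y i = 1" and y_rational: "\<forall>j\<le>n. y j ^ q = y j" and y_vanish: "\<forall>j>n. y j = 0"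
begin

definition supp :: "nat set" where
  "supp = {j. j \<le> n \<and> y j \<noteq> 0}"

definition delta :: nat where
  "delta = Gcd (a ` supp)"

definition delta_i :: nat where
  "delta_i = Gcd (a ` (supp - {i}))"

definition lift :: "'k \<Rightarrow> (nat \<Rightarrow> 'k) set" where
  "lift \<zeta> = wp_class n (a(i := 1)) (y(i := \<zeta>))"

lemma finite_supp: "finite supp"
  unfolding supp_def by (rule finite_subset[of _ "{..n}"]) auto

lemma delta_eq_gcd: "delta = gcd (a i) delta_i"
proof -
  have "supp = insert i (supp - {i})" using i_le_n y_i unfolding supp_def by auto
  then show ?thesis unfolding delta_def delta_i_def by (metis Gcd_insert image_insert)
qed

lemma delta_i_dvd: "j \<in> supp - {i} \<Longrightarrow> delta_i dvd a j"
  unfolding delta_i_def by (simp add: Gcd_dvd)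

lemma lift_in_wp_vecs: "\<zeta> \<noteq> 0 \<Longrightarrow> y(i := \<zeta>) \<in> wp_vecs n"
  unfolding wp_vecs_def using i_le_n y_vanish by (auto intro!: exI[of _ i])

lemma y_in_wp_vecs: "y \<in> wp_vecs n"
  using lift_in_wp_vecs[of 1] y_i by (metis fun_upd_triv one_neq_zero)

lemma wp_rel_lift_iff:
  assumes "\<zeta> \<noteq> 0" and "\<zeta>' \<noteq> 0"
  shows "(y(i := \<zeta>), y(i := \<zeta>')) \<in> wp_rel n (a(i := 1)) \<longleftrightarrow> (\<zeta>' / \<zeta>) ^ delta_i = 1"
proof
  assume "(y(i := \<zeta>), y(i := \<zeta>')) \<in> wp_rel n (a(i := 1))"
  then obtain l where l: "\<forall>j\<le>n. (y(i := \<zeta>')) j = l ^ (a(i := 1)) j * (y(i := \<zeta>)) j"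
    unfolding wp_rel_def by auto
  have "l = \<zeta>' / \<zeta>" using l i_le_n assms(1) by (auto simp: field_simps)
  moreover have "\<forall>j\<in>supp - {i}. l ^ a j = 1"
  proof
    fix j
    assume "j \<in> supp - {i}"
    then have j: "j \<le> n" "j \<noteq> i" "y j \<noteq> 0" unfolding supp_def by auto
    then have "y j = l ^ a j * y j" using l by auto
    then show "l ^ a j = 1" using j(3) by simp
  qed
  ultimately show "(\<zeta>' / \<zeta>) ^ delta_i = 1"
    unfolding delta_i_def using power_Gcd_eq_1 finite_supp by blast
next
  assume root: "(\<zeta>' / \<zeta>) ^ delta_i = 1"
  have "(y(i := \<zeta>')) j = (\<zeta>' / \<zeta>) ^ (a(i := 1)) j * (y(i := \<zeta>)) j" for j
  proof (cases "j \<in> supp - {i}")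
    case True
    then show ?thesis using power_eq_1_dvd[OF root delta_i_dvd] by auto
  next
    case False
    then show ?thesis using assms(1) y_vanish unfolding supp_def by (cases "j \<le> n") auto
  qed
  moreover have "\<zeta>' / \<zeta> \<noteq> 0" using assms by simp
  ultimately show "(y(i := \<zeta>), y(i := \<zeta>')) \<in> wp_rel n (a(i := 1))"
    unfolding wp_rel_def using lift_in_wp_vecs assms by blast
qed

lemma lift_eq_iff:
  assumes "\<zeta> \<noteq> 0" and "\<zeta>' \<noteq> 0"
  shows "lift \<zeta> = lift \<zeta>' \<longleftrightarrow> (\<zeta>' / \<zeta>) ^ delta_i = 1"
  unfolding lift_def using wp_class_eq_iff lift_in_wp_vecs wp_rel_lift_iff assms by metis

lemma frob_vec_lift: "frob_vec q (y(i := \<zeta>)) = y(i := \<zeta> ^ q)"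
proof
  fix j
  show "frob_vec q (y(i := \<zeta>)) j = (y(i := \<zeta> ^ q)) j"
    using y_rational y_vanish q_pos by (cases "j \<le> n") (auto simp: frob_vec_def)
qed

lemma lift_rational_iff:
  assumes "\<zeta> \<noteq> 0"
  shows "lift \<zeta> \<in> WP_rat n (a(i := 1)) q \<longleftrightarrow> \<zeta> ^ ((q - 1) * delta_i) = 1"
proof -
  have "\<zeta> / \<zeta> ^ q = inverse (\<zeta> ^ (q - 1))"
    using assms q_pos by (cases q) (auto simp: field_simps)
  then have "lift (\<zeta> ^ q) = lift \<zeta> \<longleftrightarrow> inverse (\<zeta> ^ (q - 1)) ^ delta_i = 1"
    using lift_eq_iff[of "\<zeta> ^ q" \<zeta>] assms by simp
  also have "\<dots> \<longleftrightarrow> \<zeta> ^ ((q - 1) * delta_i) = 1"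
    by (simp add: power_inverse power_mult)
  finally show ?thesis
    unfolding lift_def using wp_class_in_WP_rat_iff[OF q_pos lift_in_wp_vecs[OF assms]] frob_vec_lift
    by simp
qed

lemma pi_vec_lift: "pi_vec i a (y(i := \<zeta>)) = y(i := \<zeta> ^ a i)"
  by (simp add: pi_vec_def)

lemma pi_fibre_rat_cases:
  assumes "Q \<in> pi_fibre_rat n i a q (wp_class n a y)"
  obtains \<zeta> where "\<zeta> ^ a i = 1" and "Q = lift \<zeta>"
proof -
  have "Q \<in> WP n (a(i := 1))" using assms unfolding pi_fibre_rat_def WP_rat_def by blast
  then obtain x where x: "x \<in> wp_vecs n" and Q: "Q = wp_class n (a(i := 1)) x"
    by (rule WP_cases)
  then have "wp_class n a (pi_vec i a x) = wp_class n a y"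
    using assms wp_class_in_pi_fibre_rat_iff[OF i_le_n x] by blast
  then have "(pi_vec i a x, y) \<in> wp_rel n a"
    using wp_class_eq_iff pi_vec_wp_vecs[OF i_le_n x] y_in_wp_vecs by blast
  then obtain l where l: "l \<noteq> 0" "\<forall>j\<le>n. y j = l ^ a j * pi_vec i a x j"
    unfolding wp_rel_def by auto
  define \<zeta> where "\<zeta> = l * x i"
  have "\<zeta> ^ a i = 1"
    using l i_le_n y_i by (simp add: \<zeta>_def pi_vec_def power_mult_distrib)
  then have "\<zeta> \<noteq> 0" using root_of_unity_nonzero a_i_pos by blast
  have "\<forall>j\<le>n. (y(i := \<zeta>)) j = l ^ (a(i := 1)) j * x j"
    using l by (auto simp: \<zeta>_def pi_vec_def)
  then have "(x, y(i := \<zeta>)) \<in> wp_rel n (a(i := 1))"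
    unfolding wp_rel_def using x lift_in_wp_vecs[OF \<open>\<zeta> \<noteq> 0\<close>] l by blast
  then have "Q = lift \<zeta>" unfolding Q lift_def by (rule wp_class_eq)
  with \<open>\<zeta> ^ a i = 1\<close> show thesis by (rule that)
qed

lemma pi_fibre_rat_eq:
  "pi_fibre_rat n i a q (wp_class n a y) = lift ` {\<zeta>. \<zeta> ^ gcd (a i) ((q - 1) * delta_i) = 1}"
proof (intro set_eqI iffI)
  fix Q
  assume Q: "Q \<in> pi_fibre_rat n i a q (wp_class n a y)"
  then obtain \<zeta> where \<zeta>: "\<zeta> ^ a i = 1" "Q = lift \<zeta>" by (rule pi_fibre_rat_cases)
  then have "\<zeta> \<noteq> 0" using root_of_unity_nonzero a_i_pos by blast
  have "lift \<zeta> \<in> WP_rat n (a(i := 1)) q" using Q \<zeta> unfolding pi_fibre_rat_def by blast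
  then have "\<zeta> ^ ((q - 1) * delta_i) = 1" using lift_rational_iff[OF \<open>\<zeta> \<noteq> 0\<close>] by blast
  then show "Q \<in> lift ` {\<zeta>. \<zeta> ^ gcd (a i) ((q - 1) * delta_i) = 1}"
    using \<zeta> power_gcd_eq_1 by blast
next
  fix Q
  assume "Q \<in> lift ` {\<zeta>. \<zeta> ^ gcd (a i) ((q - 1) * delta_i) = 1}"
  then obtain \<zeta> where root: "\<zeta> ^ gcd (a i) ((q - 1) * delta_i) = 1" and Q: "Q = lift \<zeta>" by blast
  have "\<zeta> \<noteq> 0" using root_of_unity_nonzero[OF root] a_i_pos by simp
  have "\<zeta> ^ a i = 1" and "\<zeta> ^ ((q - 1) * delta_i) = 1"
    using power_eq_1_dvd[OF root] by simp_all
  then show "Q \<in> pi_fibre_rat n i a q (wp_class n a y)"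
    unfolding Q lift_def
    using wp_class_in_pi_fibre_rat_iff[OF i_le_n lift_in_wp_vecs] lift_rational_iff pi_vec_lift
    by (simp add: \<open>\<zeta> \<noteq> 0\<close> lift_def fun_upd_idem[of y, OF y_i])
qed

lemma lift_eq_iff_power_delta:
  assumes "\<zeta> ^ a i = 1" and "\<zeta>' ^ a i = 1"
  shows "lift \<zeta> = lift \<zeta>' \<longleftrightarrow> \<zeta> ^ delta = \<zeta>' ^ delta"
proof -
  have nonzero: "\<zeta> \<noteq> 0" "\<zeta>' \<noteq> 0" using assms root_of_unity_nonzero a_i_pos by blast+
  have root: "(\<zeta>' / \<zeta>) ^ a i = 1" using assms by (simp add: power_divide)
  have "(\<zeta>' / \<zeta>) ^ delta_i = 1 \<longleftrightarrow> (\<zeta>' / \<zeta>) ^ delta = 1"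
  proof
    assume "(\<zeta>' / \<zeta>) ^ delta_i = 1"
    with root show "(\<zeta>' / \<zeta>) ^ delta = 1" unfolding delta_eq_gcd by (rule power_gcd_eq_1)
  next
    assume "(\<zeta>' / \<zeta>) ^ delta = 1"
    then show "(\<zeta>' / \<zeta>) ^ delta_i = 1" by (rule power_eq_1_dvd) (simp add: delta_eq_gcd)
  qed
  also have "\<dots> \<longleftrightarrow> \<zeta> ^ delta = \<zeta>' ^ delta" using nonzero by (auto simp: power_divide)
  finally show ?thesis using lift_eq_iff[OF nonzero] by simp
qed

lemma card_pi_fibre_rat:
  assumes alg_closed: "\<forall>f :: 'k poly. degree f > 0 \<longrightarrow> (\<exists>z. poly f z = 0)"
    and "of_nat (gcd (a i) ((q - 1) * delta_i) div delta) \<noteq> (0::'k)"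
  shows "card (pi_fibre_rat n i a q (wp_class n a y)) = gcd (a i) ((q - 1) * delta_i) div delta"
proof -
  define g where "g = gcd (a i) ((q - 1) * delta_i)"
  define m where "m = g div delta"
  have "delta dvd g" unfolding g_def delta_eq_gcd by (simp add: gcd_mono)
  then have g: "g = delta * m" unfolding m_def by simp
  have "g > 0" unfolding g_def using a_i_pos by simp
  then have "delta > 0" "m > 0" unfolding g by simp_all
  have "g dvd a i" unfolding g_def by simp
  then have "\<forall>\<zeta>\<in>{\<zeta>. \<zeta> ^ g = 1}. \<forall>\<zeta>'\<in>{\<zeta>. \<zeta> ^ g = 1}. lift \<zeta> = lift \<zeta>' \<longleftrightarrow> \<zeta> ^ delta = \<zeta>' ^ delta"
    using lift_eq_iff_power_delta power_eq_1_dvd by blast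
  then have "card (lift ` {\<zeta>. \<zeta> ^ g = 1}) = card ((\<lambda>\<zeta>. \<zeta> ^ delta) ` {\<zeta>::'k. \<zeta> ^ g = 1})"
    by (rule card_image_eq_if_same_fibres)
  also have "\<dots> = card {w::'k. w ^ m = 1}"
    unfolding g using power_image_roots_of_unity[OF alg_closed \<open>delta > 0\<close>] by simp
  also have "\<dots> = m"
    using card_roots_of_unity[OF alg_closed \<open>m > 0\<close>] assms(2) unfolding m_def g_def by simp
  finally show ?thesis unfolding pi_fibre_rat_eq m_def g_def .
qed

lemma coprime_delta:
  assumes "supp - {i} \<noteq> {}" and "\<forall>j\<le>n. j \<noteq> i \<longrightarrow> gcd (gcd (a i) (a j)) c = 1"
  shows "coprime delta c"
proof -
  obtain j where j: "j \<in> supp - {i}" using assms(1) by blast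
  then have "delta dvd gcd (a i) (a j)"
    unfolding delta_eq_gcd using delta_i_dvd by (meson dvd_trans gcd_dvd2 gcd_greatest gcd_dvd1)
  then have "gcd delta c dvd gcd (gcd (a i) (a j)) c" by (rule gcd_mono) simp
  also have "gcd (gcd (a i) (a j)) c = 1" using assms(2) j unfolding supp_def by blast
  finally show ?thesis by (simp add: coprime_iff_gcd_eq_1)
qed

lemma supp_diff_nonempty:
  assumes "wp_class n a y \<noteq> wp_class n a (\<lambda>j. if j = i then (1::'k) else 0)"
  shows "supp - {i} \<noteq> {}"
proof
  assume supp_i: "supp - {i} = {}"
  have "y j = (if j = i then 1 else 0)" for j
  proof (cases "j \<le> n \<and> j \<noteq> i")
    case True
    then show ?thesis using supp_i unfolding supp_def by auto
  next
    case False
    then show ?thesis using y_i y_vanish by auto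
  qed
  then have "y = (\<lambda>j. if j = i then 1 else 0)" ..
  with assms show False by simp
qed

end

theorem mainTheorem1:
  fixes p e q n i :: nat and a :: "nat \<Rightarrow> nat" and y :: "nat \<Rightarrow> 'k::field"
  assumes "prime p" and "e \<ge> 1" and "q = p ^ e"
    and char: "of_nat p = (0::'k)"
    and alg_closed: "\<forall>f :: 'k poly. degree f > 0 \<longrightarrow> (\<exists>z. poly f z = 0)"
    and algebraic: "\<forall>z :: 'k. \<exists>m\<ge>1. z ^ (q ^ m) = z"
    and "n \<ge> 1" and "\<forall>j\<le>n. a j > 0" and "i \<le> n"
    and "y i = 1" and "\<forall>j\<le>n. y j ^ q = y j" and "\<forall>j>n. y j = 0"
    and "wp_class n a y \<noteq> wp_class n a (\<lambda>j. if j = i then (1::'k) else 0)"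
  shows "finite (pi_fibre_rat n i a q (wp_class n a y)) \<and>
     real (card (pi_fibre_rat n i a q (wp_class n a y))) =
       real (gcd (a i) ((q - 1) * Gcd (a ` ({j. j \<le> n \<and> y j \<noteq> 0} - {i}))))
       / real (Gcd (a ` {j. j \<le> n \<and> y j \<noteq> 0}))
   \<and> ((\<forall>j\<le>n. j \<noteq> i \<longrightarrow> gcd (gcd (a i) (a j)) (q - 1) = 1) \<longrightarrow>
       card (pi_fibre_rat n i a q (wp_class n a y)) = gcd (a i) (q - 1))"
proof -
  have "q > 0" using assms(1,3) by (simp add: prime_gt_0_nat)
  interpret rational_point_fibre n i q a y
    using assms \<open>q > 0\<close> by unfold_locales simp_all
  define m where "m = gcd (a i div delta) (q - 1)"
  have g: "gcd (a i) ((q - 1) * delta_i) = delta * m"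
    unfolding m_def delta_eq_gcd using gcd_mult_eq_gcd_mult_gcd_div a_i_pos by blast
  have "delta * m > 0" unfolding g[symmetric] using a_i_pos by simp
  then have "delta > 0" and "m > 0" by simp_all
  have "of_nat m \<noteq> (0::'k)"
    unfolding m_def using of_nat_neq_0_if_dvd_prime_power_minus_1[OF assms(1) char assms(2)] assms(3)
    by simp
  then have card: "card (pi_fibre_rat n i a q (wp_class n a y)) = m"
    using card_pi_fibre_rat[OF alg_closed] g \<open>delta > 0\<close> by simp
  have Gcd_supp: "Gcd (a ` {j. j \<le> n \<and> y j \<noteq> 0}) = delta"
    and Gcd_supp_i: "Gcd (a ` ({j. j \<le> n \<and> y j \<noteq> 0} - {i})) = delta_i"
    unfolding delta_def delta_i_def supp_def by simp_all
  have "finite (pi_fibre_rat n i a q (wp_class n a y))"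
    using card \<open>m > 0\<close> by (intro card_ge_0_finite) simp
  moreover have "real m = real (delta * m) / real delta" using \<open>delta > 0\<close> by simp
  moreover have "m = gcd (a i) (q - 1)" if "\<forall>j\<le>n. j \<noteq> i \<longrightarrow> gcd (gcd (a i) (a j)) (q - 1) = 1"
    using coprime_delta[OF supp_diff_nonempty[OF assms(13)] that] gcd_div_coprime
    unfolding m_def delta_eq_gcd by simp
  ultimately show ?thesis unfolding Gcd_supp Gcd_supp_i g card by blast
qed

end
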